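(* Let $\mathcal{P}$ be a collection of cells and let $[a,b]$ and $[\alpha,\beta]$ be two inner intervals of $\mathcal{P}$, where $c,d$ are the anti-diagonal corners of $[a,b]$ and $\gamma,\delta$ are the anti-diagonal corners of $[\alpha,\beta]$. Suppose $|\{a,b,c,d\}\cap\{\alpha,\beta,\gamma,\delta\}|=2$. Then for every $\mathsf{P}$-order $<^{\mathsf{P}}$ on $V(\mathcal{P})$, the $S$-polynomial $S(f_{a,b},f_{\alpha,\beta})$ reduces to $0$ modulo $\mathcal{G}$ with respect to $<^{\mathsf{P}}_{\mathrm{lex}}$.
   Context: For $a=(i,j), b=(k,l)\in\mathbb{Z}^2$ with $a\le b$ componentwise, the interval $[a,b]=\{(m,n)\in\mathbb{Z}^2: i\le m\le k,\ j\le n\le l\}$; it is proper if $i<k$ and $j<l$, in which case $a,b$ are its diagonal corners and $c=(i,l)$ (upper left), $d=(k,j)$ (lower right) its anti-diagonal corners. A cell is a proper interval $[v,v+(1,1)]$; its vertices are its four corners. A collection of cells $\mathcal{P}$ is a nonempty finite set of cells; $V(\mathcal{P})$ is the set of all vertices of its cells. A proper interval $[a,b]$ is an inner interval of $\mathcal{P}$ if every cell $[v,v+(1,1)]\subseteq[a,b]$ belongs to $\mathcal{P}$. Let $K$ be a field and $S=K[x_v: v\in V(\mathcal{P})]$. For an inner interval $[a,b]$ with anti-diagonal corners $c$ (upper left), $d$ (lower right), put $f_{a,b}=x_ax_b-x_cx_d$ (an inner 2-minor); $\mathcal{G}$ is the set of all inner 2-minors of $\mathcal{P}$. A $\mathsf{P}$-order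 is a total order $<^{\mathsf{P}}$ on $V(\mathcal{P})$; $<^{\mathsf{P}}_{\mathrm{lex}}$ denotes the lexicographic monomial order on $S$ induced by the variable order $x_u<x_v \iff u<^{\mathsf{P}}v$. $S(f,g)$ denotes the $S$-polynomial with respect to this order. *)

theory Defs
  imports Main "HOL-Library.Poly_Mapping"
begin

type_synonym point = "int \<times> int"
type_synonym monomial = "point \<Rightarrow>\<^sub>0 nat"
type_synonym 'k mpoly = "monomial \<Rightarrow>\<^sub>0 'k"

text \<open>A cell [v, v+(1,1)] is represented by its lower-left corner v;
  a collection of cells is thus a set of points.\<close>

definition cell_vertices :: "point \<Rightarrow> point set" where
  "cell_vertices v = {v, (fst v + 1, snd v), (fst v, snd v + 1), (fst v + 1, snd v + 1)}"

definition is_collection_of_cells :: "point set \<Rightarrow> bool" where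
  "is_collection_of_cells P \<longleftrightarrow> finite P \<and> P \<noteq> {}"

definition vertex_set :: "point set \<Rightarrow> point set" where
  "vertex_set P = (\<Union>v\<in>P. cell_vertices v)"

definition inner_interval :: "point set \<Rightarrow> point \<Rightarrow> point \<Rightarrow> bool" where
  "inner_interval P a b \<longleftrightarrow> fst a < fst b \<and> snd a < snd b \<and>
     (\<forall>v. fst a \<le> fst v \<and> fst v + 1 \<le> fst b \<and> snd a \<le> snd v \<and> snd v + 1 \<le> snd b \<longrightarrow> v \<in> P)"

definition ul_corner :: "point \<Rightarrow> point \<Rightarrow> point" where
  "ul_corner a b = (fst a, snd b)"

definition lr_corner :: "point \<Rightarrow> point \<Rightarrow> point" where
  "lr_corner a b = (fst b, snd a)"

definition var :: "point \<Rightarrow> 'k::field mpoly" where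
  "var v = Poly_Mapping.single (Poly_Mapping.single v 1) 1"

definition inner_minor :: "point \<Rightarrow> point \<Rightarrow> 'k::field mpoly" where
  "inner_minor a b = var a * var b - var (ul_corner a b) * var (lr_corner a b)"

definition inner_minors :: "point set \<Rightarrow> 'k::field mpoly set" where
  "inner_minors P = {inner_minor a b | a b. inner_interval P a b}"

text \<open>Lexicographic monomial order induced by a strict variable order r
  ((u,v) \<in> r means x_u < x_v): s < t iff at the largest variable where the
  exponents differ, t has the larger exponent.\<close>
definition lex_less :: "point rel \<Rightarrow> monomial \<Rightarrow> monomial \<Rightarrow> bool" where
  "lex_less r s t \<longleftrightarrow> (\<exists>v. Poly_Mapping.lookup s v < Poly_Mapping.lookup t v \<and>
      (\<forall>u. (v, u) \<in> r \<longrightarrow> Poly_Mapping.lookup s u = Poly_Mapping.lookup t u))"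

definition lead_mon :: "point rel \<Rightarrow> 'k::field mpoly \<Rightarrow> monomial" where
  "lead_mon r p = (THE m. m \<in> Poly_Mapping.keys p \<and> (\<forall>m'\<in>Poly_Mapping.keys p. m' \<noteq> m \<longrightarrow> lex_less r m' m))"

definition lead_coeff_mp :: "point rel \<Rightarrow> 'k::field mpoly \<Rightarrow> 'k" where
  "lead_coeff_mp r p = Poly_Mapping.lookup p (lead_mon r p)"

definition mon_dvd :: "monomial \<Rightarrow> monomial \<Rightarrow> bool" where
  "mon_dvd s t \<longleftrightarrow> (\<forall>v. Poly_Mapping.lookup s v \<le> Poly_Mapping.lookup t v)"

definition mon_lcm :: "monomial \<Rightarrow> monomial \<Rightarrow> monomial" where
  "mon_lcm s t = s + (t - s)"

definition monom_term :: "monomial \<Rightarrow> 'k::field \<Rightarrow> 'k mpoly" where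
  "monom_term m c = Poly_Mapping.single m c"

definition spoly :: "point rel \<Rightarrow> 'k::field mpoly \<Rightarrow> 'k mpoly \<Rightarrow> 'k mpoly" where
  "spoly r f g =
     (let L = mon_lcm (lead_mon r f) (lead_mon r g) in
      monom_term (L - lead_mon r f) (1 / lead_coeff_mp r f) * f
      - monom_term (L - lead_mon r g) (1 / lead_coeff_mp r g) * g)"

definition red_step :: "point rel \<Rightarrow> 'k::field mpoly set \<Rightarrow> 'k mpoly \<Rightarrow> 'k mpoly \<Rightarrow> bool" where
  "red_step r G p q \<longleftrightarrow> (\<exists>g\<in>G. \<exists>t\<in>Poly_Mapping.keys p. g \<noteq> 0 \<and> mon_dvd (lead_mon r g) t \<and>
      q = p - monom_term (t - lead_mon r g) (Poly_Mapping.lookup p t / lead_coeff_mp r g) * g)"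

definition reduces_to_zero :: "point rel \<Rightarrow> 'k::field mpoly set \<Rightarrow> 'k mpoly \<Rightarrow> bool" where
  "reduces_to_zero r G p \<longleftrightarrow> (red_step r G)\<^sup>*\<^sup>* p 0"

end

theory Submission
  imports Defs
begin

text \<open>Two inner intervals sharing exactly two corners have the same pair of columns and
  exactly one common row (or the transposed situation). Their three distinct rows span a
  third inner interval, and the three inner minors form the 2-minors f, g, h of a generic
  2 \<times> 3 matrix of variables. If the leading monomials of f and g share a variable, then
  S(f, g) is a variable times \<plusminus>h and reduces to 0 in one step; otherwise the leading
  monomials are coprime and S(f, g) reduces to 0 by f and then g.\<close>

definition binom :: "monomial \<Rightarrow> monomial \<Rightarrow> 'k::field mpoly" where
  "binom A B = Poly_Mapping.single A 1 - Poly_Mapping.single B 1"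

lemma lookup_binom:
  "Poly_Mapping.lookup (binom A B :: 'k::field mpoly) m = (if m = A then 1 else 0) - (if m = B then 1 else 0)"
  by (simp add: binom_def lookup_minus lookup_single when_def)

lemma keys_binom: "A \<noteq> B \<Longrightarrow> Poly_Mapping.keys (binom A B :: 'k::field mpoly) = {A, B}"
  by (auto simp: in_keys_iff lookup_binom split: if_splits)

lemma binom_self [simp]: "binom A A = 0"
  by (simp add: binom_def)

lemma binom_eq_zero_iff: "(binom A B :: 'k::field mpoly) = 0 \<longleftrightarrow> A = B"
  by (metis binom_self keys_binom insert_not_empty keys_eq_empty)

definition pm_binom :: "'k::field mpoly \<Rightarrow> monomial \<Rightarrow> monomial \<Rightarrow> bool" where
  "pm_binom f A B \<longleftrightarrow> f = binom A B \<or> f = binom B A"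

lemma pm_binom_commute: "pm_binom f A B \<longleftrightarrow> pm_binom f B A"
  by (auto simp: pm_binom_def)

definition lead_binomial :: "point rel \<Rightarrow> 'k::field mpoly \<Rightarrow> monomial \<Rightarrow> monomial \<Rightarrow> bool" where
  "lead_binomial r f F F' \<longleftrightarrow> F \<noteq> F' \<and> lead_mon r f = F \<and> pm_binom f F F'"

lemma lead_binomialI:
  assumes "F \<noteq> F'" "lex_less r F' F" "\<not> lex_less r F F'" "pm_binom f F F'"
  shows "lead_binomial r (f :: 'k::field mpoly) F F'"
proof -
  have keys: "Poly_Mapping.keys f = {F, F'}"
    using assms(1,4) keys_binom[of F F'] keys_binom[of F' F] by (auto simp: pm_binom_def)
  have "lead_mon r f = F"
    unfolding lead_mon_def keys by (rule the_equality) (use assms(2,3) in auto)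
  with assms(1,4) show ?thesis
    by (simp add: lead_binomial_def)
qed

lemma monom_term_times_lead_binomial:
  assumes "lead_binomial r h H H'"
  shows "monom_term M (c / lead_coeff_mp r h) * h =
         Poly_Mapping.single (M + H) c - Poly_Mapping.single (M + H') c"
proof -
  have "H \<noteq> H'" and lc: "lead_coeff_mp r h = Poly_Mapping.lookup h H"
    using assms by (auto simp: lead_binomial_def lead_coeff_mp_def)
  from assms consider "h = binom H H'" | "h = binom H' H"
    by (auto simp: lead_binomial_def pm_binom_def)
  then show ?thesis
  proof cases
    case 1
    then have "lead_coeff_mp r h = 1"
      using lc \<open>H \<noteq> H'\<close> by (simp add: lookup_binom)
    with 1 show ?thesis
      by (simp add: monom_term_def binom_def right_diff_distrib mult_single)
  next
    case 2
    then have "lead_coeff_mp r h = -1"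
      using lc \<open>H \<noteq> H'\<close> by (simp add: lookup_binom)
    with 2 show ?thesis
      by (simp add: monom_term_def binom_def right_diff_distrib mult_single single_uminus)
  qed
qed

lemma spoly_lead_binomials:
  assumes f: "lead_binomial r f F F'" and g: "lead_binomial r g G G'"
  shows "spoly r f g = binom (mon_lcm F G - G + G') (mon_lcm F G - F + F')"
proof -
  define L where "L = mon_lcm F G"
  have "L - F + F = L" "L - G + G = L"
    by (rule poly_mapping_eqI; simp add: L_def mon_lcm_def lookup_add lookup_minus)+
  then have "monom_term (L - F) (1 / lead_coeff_mp r f) * f =
               Poly_Mapping.single L 1 - Poly_Mapping.single (L - F + F') 1"
    and "monom_term (L - G) (1 / lead_coeff_mp r g) * g =
               Poly_Mapping.single L 1 - Poly_Mapping.single (L - G + G') 1"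
    using monom_term_times_lead_binomial[OF f] monom_term_times_lead_binomial[OF g] by simp_all
  moreover have "lead_mon r f = F" "lead_mon r g = G"
    using f g by (simp_all add: lead_binomial_def)
  ultimately show ?thesis
    by (simp add: spoly_def Let_def L_def binom_def)
qed

lemma mon_dvd_diff_add: "mon_dvd H t \<Longrightarrow> t - H + H = t"
  by (intro poly_mapping_eqI) (metis mon_dvd_def le_add_diff_inverse2 lookup_add lookup_minus)

lemma red_step_lead_binomial:
  assumes "h \<in> G" and h: "lead_binomial r h H H'" and "mon_dvd H t"
    and c: "Poly_Mapping.lookup p t \<noteq> 0"
  shows "red_step r G p (p - Poly_Mapping.single t (Poly_Mapping.lookup p t)
                           + Poly_Mapping.single (t - H + H') (Poly_Mapping.lookup p t))"
proof -
  have "t - H + H = t"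
    using \<open>mon_dvd H t\<close> by (rule mon_dvd_diff_add)
  then have "monom_term (t - H) (Poly_Mapping.lookup p t / lead_coeff_mp r h) * h =
             Poly_Mapping.single t (Poly_Mapping.lookup p t)
             - Poly_Mapping.single (t - H + H') (Poly_Mapping.lookup p t)"
    by (simp add: monom_term_times_lead_binomial[OF h])
  moreover have "h \<noteq> 0" "lead_mon r h = H"
    using h by (auto simp: lead_binomial_def pm_binom_def binom_eq_zero_iff)
  ultimately show ?thesis
    unfolding red_step_def using assms by (auto simp: in_keys_iff intro!: bexI[of _ h] bexI[of _ t])
qed

lemma reduces_to_zero_zero: "reduces_to_zero r G 0"
  by (simp add: reduces_to_zero_def)

lemma reduces_to_zero_red_step:
  "red_step r G p q \<Longrightarrow> reduces_to_zero r G q \<Longrightarrow> reduces_to_zero r G p"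
  unfolding reduces_to_zero_def by (rule converse_rtranclp_into_rtranclp)

lemma reduces_to_zero_binom_single_step:
  assumes "h \<in> G" "lead_binomial r h H H'" "mon_dvd H M" "M' = M - H + H'"
  shows "reduces_to_zero r G (binom M M' :: 'k::field mpoly)"
    and "reduces_to_zero r G (binom M' M :: 'k::field mpoly)"
proof -
  have "red_step r G (binom M M' :: 'k mpoly) 0 \<and> red_step r G (binom M' M :: 'k mpoly) 0"
    if "M \<noteq> M'"
  proof -
    have "Poly_Mapping.lookup (binom M M' :: 'k mpoly) M = 1"
      "Poly_Mapping.lookup (binom M' M :: 'k mpoly) M = -1"
      using that by (simp_all add: lookup_binom)
    then show ?thesis
      using red_step_lead_binomial[OF assms(1-3), of "binom M M'"]
        red_step_lead_binomial[OF assms(1-3), of "binom M' M"] assms(4)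
      by (simp add: binom_def single_uminus)
  qed
  then show "reduces_to_zero r G (binom M M' :: 'k::field mpoly)"
    and "reduces_to_zero r G (binom M' M :: 'k::field mpoly)"
    by (metis binom_self reduces_to_zero_red_step reduces_to_zero_zero)+
qed

lemma mon_dvd_add: "mon_dvd A (A + B)"
  by (simp add: mon_dvd_def lookup_add)

lemma reduces_to_zero_spoly_coprime:
  assumes "f \<in> G" "g \<in> G" and f: "lead_binomial r f A A'" and g: "lead_binomial r g B B'"
    and "mon_lcm A B = A + B"
  shows "reduces_to_zero r G (spoly r f g :: 'k::field mpoly)"
proof -
  have spoly: "spoly r f g = binom (A + B') (B + A')"
    using spoly_lead_binomials[OF f g] assms(5) by (simp add: add.commute)
  have "reduces_to_zero r G (binom (B' + A') (B + A') :: 'k mpoly)"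
    by (rule reduces_to_zero_binom_single_step(2)[OF assms(2) g mon_dvd_add]) (simp add: add.commute)
  moreover have "red_step r G (binom (A + B') (B + A') :: 'k mpoly) (binom (B' + A') (B + A'))"
    if "A + B' \<noteq> B + A'"
  proof -
    have "Poly_Mapping.lookup (binom (A + B') (B + A') :: 'k mpoly) (A + B') = 1"
      using that by (simp add: lookup_binom)
    then show ?thesis
      using red_step_lead_binomial[OF assms(1) f mon_dvd_add[of A B'], of "binom (A + B') (B + A')"]
      by (simp add: binom_def)
  qed
  ultimately show ?thesis
    unfolding spoly by (metis binom_self reduces_to_zero_red_step reduces_to_zero_zero)
qed

definition mon_pair :: "point \<Rightarrow> point \<Rightarrow> monomial" where
  "mon_pair x y = Poly_Mapping.single x 1 + Poly_Mapping.single y 1"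

lemma mon_pair_commute: "mon_pair x y = mon_pair y x"
  by (simp add: mon_pair_def add.commute)

lemma lookup_mon_pair:
  "Poly_Mapping.lookup (mon_pair x y) v = (if x = v then 1 else 0) + (if y = v then 1 else 0)"
  by (simp add: mon_pair_def lookup_add lookup_single when_def)

lemma mon_pair_neq:
  assumes "distinct [w, x, y, z]"
  shows "mon_pair w x \<noteq> mon_pair y z"
proof
  assume "mon_pair w x = mon_pair y z"
  then have "Poly_Mapping.lookup (mon_pair w x) w = Poly_Mapping.lookup (mon_pair y z) w"
    by simp
  with assms show False
    by (auto simp: lookup_mon_pair)
qed

lemma strict_linear_order_on_finite_has_max:
  assumes "strict_linear_order_on V r" "finite X" "X \<noteq> {}" "X \<subseteq> V"
  shows "\<exists>m\<in>X. \<forall>u\<in>X. u \<noteq> m \<longrightarrow> (u, m) \<in> r"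
  using assms(2-4)
proof (induction X rule: finite_ne_induct)
  case (insert x X)
  then obtain m where m: "m \<in> X" "\<forall>u\<in>X. u \<noteq> m \<longrightarrow> (u, m) \<in> r"
    by auto
  have "trans r" "total_on V r"
    using assms(1) by (auto simp: strict_linear_order_on_def)
  moreover have "x \<in> V" "m \<in> V"
    using insert m by auto
  ultimately have "(m, x) \<in> r \<or> x = m \<or> (x, m) \<in> r"
    by (auto simp: total_on_def)
  then show ?case
    using m \<open>trans r\<close> by (auto dest: transD)
qed simp

lemma lex_less_mon_pair:
  assumes slo: "strict_linear_order_on V r"
    and dist: "distinct [w, x, y, z]" and V: "{w, x, y, z} \<subseteq> V"
    and "m \<in> {w, x}" and max: "\<forall>u\<in>{w, x, y, z}. u \<noteq> m \<longrightarrow> (u, m) \<in> r"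
  shows "lex_less r (mon_pair y z) (mon_pair w x)" and "\<not> lex_less r (mon_pair w x) (mon_pair y z)"
proof -
  have "trans r" "irrefl r" "total_on V r"
    using slo by (auto simp: strict_linear_order_on_def)
  have above: "u \<notin> {w, x, y, z}" if "(m, u) \<in> r" for u
  proof
    assume "u \<in> {w, x, y, z}"
    moreover have "u \<noteq> m"
      using that irreflD[OF \<open>irrefl r\<close>, of m] by blast
    ultimately have "(u, m) \<in> r"
      using max by blast
    with that \<open>trans r\<close> show False
      using irreflD[OF \<open>irrefl r\<close>, of m] by (blast dest: transD)
  qed
  show "lex_less r (mon_pair y z) (mon_pair w x)"
    unfolding lex_less_def
    by (rule exI[of _ m]) (use \<open>m \<in> {w, x}\<close> dist above in \<open>auto simp: lookup_mon_pair\<close>)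
  show "\<not> lex_less r (mon_pair w x) (mon_pair y z)"
  proof
    assume "lex_less r (mon_pair w x) (mon_pair y z)"
    then obtain v where v: "Poly_Mapping.lookup (mon_pair w x) v < Poly_Mapping.lookup (mon_pair y z) v"
      "\<forall>u. (v, u) \<in> r \<longrightarrow> Poly_Mapping.lookup (mon_pair w x) u = Poly_Mapping.lookup (mon_pair y z) u"
      unfolding lex_less_def by blast
    have "v \<in> {y, z}"
      using v(1) by (auto simp: lookup_mon_pair split: if_splits)
    then have "v \<noteq> m" "v \<in> V" "m \<in> V"
      using \<open>m \<in> {w, x}\<close> dist V by auto
    then have "(v, m) \<in> r \<or> (m, v) \<in> r"
      using \<open>total_on V r\<close> by (auto simp: total_on_def)
    then show False
    proof
      assume "(v, m) \<in> r"
      then have "Poly_Mapping.lookup (mon_pair w x) m = Poly_Mapping.lookup (mon_pair y z) m"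
        using v(2) by blast
      with \<open>m \<in> {w, x}\<close> dist show False
        by (auto simp: lookup_mon_pair)
    next
      assume "(m, v) \<in> r"
      with above \<open>v \<in> {y, z}\<close> show False
        by blast
    qed
  qed
qed

lemma lead_binomial_mon_pair:
  assumes slo: "strict_linear_order_on V r"
    and dist: "distinct [w, x, y, z]" and V: "{w, x, y, z} \<subseteq> V"
    and f: "pm_binom f (mon_pair w x) (mon_pair y z)"
  shows "lead_binomial r (f :: 'k::field mpoly) (mon_pair w x) (mon_pair y z) \<or>
         lead_binomial r f (mon_pair y z) (mon_pair w x)"
proof -
  have "\<exists>m\<in>{w, x, y, z}. \<forall>u\<in>{w, x, y, z}. u \<noteq> m \<longrightarrow> (u, m) \<in> r"
    by (rule strict_linear_order_on_finite_has_max[OF slo _ _ V]) auto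
  then obtain m where m: "m \<in> {w, x, y, z}" "\<forall>u\<in>{w, x, y, z}. u \<noteq> m \<longrightarrow> (u, m) \<in> r"
    by blast
  have neq: "mon_pair w x \<noteq> mon_pair y z"
    using dist by (rule mon_pair_neq)
  show ?thesis
  proof (cases "m \<in> {w, x}")
    case True
    then show ?thesis
      using lex_less_mon_pair[OF slo dist V True m(2)] lead_binomialI[OF neq] f by blast
  next
    case False
    then have "m \<in> {y, z}"
      using m(1) by auto
    moreover have "distinct [y, z, w, x]" "{y, z, w, x} \<subseteq> V" "\<forall>u\<in>{y, z, w, x}. u \<noteq> m \<longrightarrow> (u, m) \<in> r"
      using dist V m(2) by auto
    ultimately have "lead_binomial r f (mon_pair y z) (mon_pair w x)"
      using lex_less_mon_pair[OF slo] f
      by (intro lead_binomialI[OF neq[symmetric]]) (simp_all add: pm_binom_commute)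
    then show ?thesis ..
  qed
qed

lemma reduces_to_zero_spoly_2x3_minors_oriented:
  assumes slo: "strict_linear_order_on V r"
    and dist: "distinct [a1, a2, a3, b1, b2, b3]" and V: "{a1, a2, a3, b1, b2, b3} \<subseteq> V"
    and "f \<in> G" "g \<in> G" "h \<in> G"
    and f: "lead_binomial r f (mon_pair a1 b2) (mon_pair b1 a2)"
    and g: "pm_binom g (mon_pair a1 b3) (mon_pair b1 a3)"
    and h: "pm_binom h (mon_pair a2 b3) (mon_pair b2 a3)"
  shows "reduces_to_zero r G (spoly r f g :: 'k::field mpoly)"
proof -
  consider (shared) "lead_binomial r g (mon_pair a1 b3) (mon_pair b1 a3)"
    | (coprime) "lead_binomial r g (mon_pair b1 a3) (mon_pair a1 b3)"
    using lead_binomial_mon_pair[OF slo _ _ g] dist V by auto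
  then show ?thesis
  proof cases
    case shared
    have spoly: "spoly r f g =
          binom (mon_pair b2 a3 + Poly_Mapping.single b1 1) (mon_pair a2 b3 + Poly_Mapping.single b1 1)"
      unfolding spoly_lead_binomials[OF f shared]
      by (intro arg_cong2[where f = binom] poly_mapping_eqI)
        (use dist in \<open>auto simp: lookup_add lookup_minus lookup_single when_def lookup_mon_pair mon_lcm_def\<close>)
    consider "lead_binomial r h (mon_pair a2 b3) (mon_pair b2 a3)"
      | "lead_binomial r h (mon_pair b2 a3) (mon_pair a2 b3)"
      using lead_binomial_mon_pair[OF slo _ _ h] dist V by auto
    then show ?thesis
    proof cases
      case 1
      show ?thesis
        unfolding spoly by (rule reduces_to_zero_binom_single_step(2)[OF \<open>h \<in> G\<close> 1 mon_dvd_add])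
          (simp add: add.commute)
    next
      case 2
      show ?thesis
        unfolding spoly by (rule reduces_to_zero_binom_single_step(1)[OF \<open>h \<in> G\<close> 2 mon_dvd_add])
          (simp add: add.commute)
    qed
  next
    case coprime
    show ?thesis
      by (rule reduces_to_zero_spoly_coprime[OF \<open>f \<in> G\<close> \<open>g \<in> G\<close> f coprime], rule poly_mapping_eqI)
        (use dist in \<open>auto simp: lookup_add lookup_minus lookup_mon_pair mon_lcm_def\<close>)
  qed
qed

lemma reduces_to_zero_spoly_2x3_minors:
  assumes slo: "strict_linear_order_on V r"
    and dist: "distinct [a1, a2, a3, b1, b2, b3]" and V: "{a1, a2, a3, b1, b2, b3} \<subseteq> V"
    and G: "f \<in> G" "g \<in> G" "h \<in> G"
    and f: "pm_binom f (mon_pair a1 b2) (mon_pair b1 a2)"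
    and g: "pm_binom g (mon_pair a1 b3) (mon_pair b1 a3)"
    and h: "pm_binom h (mon_pair a2 b3) (mon_pair b2 a3)"
  shows "reduces_to_zero r G (spoly r f g :: 'k::field mpoly)"
proof -
  consider "lead_binomial r f (mon_pair a1 b2) (mon_pair b1 a2)"
    | "lead_binomial r f (mon_pair b1 a2) (mon_pair a1 b2)"
    using lead_binomial_mon_pair[OF slo _ _ f] dist V by auto
  then show ?thesis
  proof cases
    case 1
    then show ?thesis
      by (rule reduces_to_zero_spoly_2x3_minors_oriented[OF slo dist V G _ g h])
  next
    case 2
    \<comment> \<open>exchanging the two rows of the matrix preserves the hypotheses\<close>
    have "distinct [b1, b2, b3, a1, a2, a3]" "{b1, b2, b3, a1, a2, a3} \<subseteq> V"
      using dist V by auto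
    moreover have "pm_binom g (mon_pair b1 a3) (mon_pair a1 b3)"
      "pm_binom h (mon_pair b2 a3) (mon_pair a2 b3)"
      using g h by (simp_all add: pm_binom_commute mon_pair_commute)
    ultimately show ?thesis
      using reduces_to_zero_spoly_2x3_minors_oriented[OF slo _ _ G 2] by blast
  qed
qed

lemma inner_minor_eq_binom:
  "inner_minor (x1, y1) (x2, y2) = binom (mon_pair (x1, y1) (x2, y2)) (mon_pair (x1, y2) (x2, y1))"
  by (simp add: inner_minor_def var_def ul_corner_def lr_corner_def binom_def mon_pair_def mult_single)

lemma inner_minor_same_columns:
  "{j, l} = {s, t} \<Longrightarrow> pm_binom (inner_minor (i, j) (k, l)) (mon_pair (i, s) (k, t)) (mon_pair (k, s) (i, t))"
  by (auto simp: doubleton_eq_iff inner_minor_eq_binom pm_binom_def mon_pair_commute)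

lemma inner_minor_same_rows:
  "{i, k} = {s, t} \<Longrightarrow> pm_binom (inner_minor (i, j) (k, l)) (mon_pair (s, j) (t, l)) (mon_pair (s, l) (t, j))"
  by (auto simp: doubleton_eq_iff inner_minor_eq_binom pm_binom_def mon_pair_commute)

lemma inner_interval_iff_cells:
  "inner_interval P a b \<longleftrightarrow>
     fst a < fst b \<and> snd a < snd b \<and> {fst a..<fst b} \<times> {snd a..<snd b} \<subseteq> P"
  by (auto simp: inner_interval_def)

lemma inner_interval_corners_in_vertex_set:
  assumes "inner_interval P (x1, y1) (x2, y2)"
  shows "{(x1, y1), (x2, y2), (x1, y2), (x2, y1)} \<subseteq> vertex_set P"
proof -
  have "x1 < x2" "y1 < y2" and cells: "{x1..<x2} \<times> {y1..<y2} \<subseteq> P"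
    using assms by (auto simp: inner_interval_iff_cells)
  then have "(x1, y1) \<in> P" "(x2 - 1, y2 - 1) \<in> P" "(x1, y2 - 1) \<in> P" "(x2 - 1, y1) \<in> P"
    by auto
  moreover have "(x1, y1) \<in> cell_vertices (x1, y1)" "(x2, y2) \<in> cell_vertices (x2 - 1, y2 - 1)"
    "(x1, y2) \<in> cell_vertices (x1, y2 - 1)" "(x2, y1) \<in> cell_vertices (x2 - 1, y1)"
    by (simp_all add: cell_vertices_def)
  ultimately show ?thesis
    unfolding vertex_set_def by blast
qed

lemma two_sets_of_two_meeting_in_one:
  assumes "j \<noteq> l" "j' \<noteq> l'" "card ({j, l} \<inter> {j', l'}) = 1"
  obtains s t u where "{j, l} = {s, t}" "{j', l'} = {s, u}" "distinct [s, t, u]"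
proof -
  obtain s where s: "{j, l} \<inter> {j', l'} = {s}"
    using assms(3) by (rule card_1_singletonE)
  define t where "t = (if s = j then l else j)"
  define u where "u = (if s = j' then l' else j')"
  have "{j, l} = {s, t}" "{j', l'} = {s, u}" "distinct [s, t, u]"
    using s assms(1,2) by (auto simp: t_def u_def doubleton_eq_iff)
  then show ?thesis
    by (rule that)
qed

lemma atLeastLessThan_between_other_endpoints:
  fixes j l j' l' s t u :: int
  assumes "j < l" "j' < l'" "{j, l} = {s, t}" "{j', l'} = {s, u}" "t \<noteq> u"
  shows "{min t u..<max t u} \<subseteq> {j..<l} \<union> {j'..<l'}"
  using assms by (auto simp: doubleton_eq_iff)

lemma inner_minor_in_inner_minors: "inner_interval P a b \<Longrightarrow> inner_minor a b \<in> inner_minors P"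
  unfolding inner_minors_def by blast

lemma reduces_to_zero_spoly_same_columns:
  assumes slo: "strict_linear_order_on (vertex_set P) r"
    and I1: "inner_interval P (i, j) (k, l)" and I2: "inner_interval P (i, j') (k, l')"
    and "card ({j, l} \<inter> {j', l'}) = 1"
  shows "reduces_to_zero r (inner_minors P :: 'k::field mpoly set)
           (spoly r (inner_minor (i, j) (k, l)) (inner_minor (i, j') (k, l')))"
proof -
  have "i < k" "j < l" "j' < l'"
    using I1 I2 by (auto simp: inner_interval_def)
  then have "j \<noteq> l" "j' \<noteq> l'"
    by simp_all
  then obtain s t u where st: "{j, l} = {s, t}" and su: "{j', l'} = {s, u}" and "distinct [s, t, u]"
    using assms(4) by (rule two_sets_of_two_meeting_in_one)
  have "{min t u..<max t u} \<subseteq> {j..<l} \<union> {j'..<l'}"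
    using atLeastLessThan_between_other_endpoints[OF \<open>j < l\<close> \<open>j' < l'\<close> st su]
      \<open>distinct [s, t, u]\<close> by simp
  moreover have "{i..<k} \<times> {j..<l} \<subseteq> P" "{i..<k} \<times> {j'..<l'} \<subseteq> P"
    using I1 I2 by (simp_all add: inner_interval_iff_cells)
  ultimately have "{i..<k} \<times> {min t u..<max t u} \<subseteq> P"
    by blast
  moreover have "min t u < max t u"
    using \<open>distinct [s, t, u]\<close> by (simp add: min_def max_def)
  ultimately have I3: "inner_interval P (i, min t u) (k, max t u)"
    using \<open>i < k\<close> by (simp add: inner_interval_iff_cells)
  have tu: "{min t u, max t u} = {t, u}"
    by (auto simp: min_def max_def)
  have V: "{(i, s), (i, t), (i, u), (k, s), (k, t), (k, u)} \<subseteq> vertex_set P"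
    using inner_interval_corners_in_vertex_set[OF I1] inner_interval_corners_in_vertex_set[OF I2]
      st su by (auto simp: doubleton_eq_iff)
  have dist: "distinct [(i, s), (i, t), (i, u), (k, s), (k, t), (k, u)]"
    using \<open>i < k\<close> \<open>distinct [s, t, u]\<close> by auto
  show ?thesis
    by (rule reduces_to_zero_spoly_2x3_minors[OF slo dist V
          inner_minor_in_inner_minors[OF I1] inner_minor_in_inner_minors[OF I2]
          inner_minor_in_inner_minors[OF I3] inner_minor_same_columns[OF st]
          inner_minor_same_columns[OF su] inner_minor_same_columns[OF tu]])
qed

lemma reduces_to_zero_spoly_same_rows:
  assumes slo: "strict_linear_order_on (vertex_set P) r"
    and I1: "inner_interval P (i, j) (k, l)" and I2: "inner_interval P (i', j) (k', l)"
    and "card ({i, k} \<inter> {i', k'}) = 1"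
  shows "reduces_to_zero r (inner_minors P :: 'k::field mpoly set)
           (spoly r (inner_minor (i, j) (k, l)) (inner_minor (i', j) (k', l)))"
proof -
  have "j < l" "i < k" "i' < k'"
    using I1 I2 by (auto simp: inner_interval_def)
  then have "i \<noteq> k" "i' \<noteq> k'"
    by simp_all
  then obtain s t u where st: "{i, k} = {s, t}" and su: "{i', k'} = {s, u}" and "distinct [s, t, u]"
    using assms(4) by (rule two_sets_of_two_meeting_in_one)
  have "{min t u..<max t u} \<subseteq> {i..<k} \<union> {i'..<k'}"
    using atLeastLessThan_between_other_endpoints[OF \<open>i < k\<close> \<open>i' < k'\<close> st su]
      \<open>distinct [s, t, u]\<close> by simp
  moreover have "{i..<k} \<times> {j..<l} \<subseteq> P" "{i'..<k'} \<times> {j..<l} \<subseteq> P"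
    using I1 I2 by (simp_all add: inner_interval_iff_cells)
  ultimately have "{min t u..<max t u} \<times> {j..<l} \<subseteq> P"
    by blast
  moreover have "min t u < max t u"
    using \<open>distinct [s, t, u]\<close> by (simp add: min_def max_def)
  ultimately have I3: "inner_interval P (min t u, j) (max t u, l)"
    using \<open>j < l\<close> by (simp add: inner_interval_iff_cells)
  have tu: "{min t u, max t u} = {t, u}"
    by (auto simp: min_def max_def)
  have V: "{(s, j), (t, j), (u, j), (s, l), (t, l), (u, l)} \<subseteq> vertex_set P"
    using inner_interval_corners_in_vertex_set[OF I1] inner_interval_corners_in_vertex_set[OF I2]
      st su by (auto simp: doubleton_eq_iff)
  have dist: "distinct [(s, j), (t, j), (u, j), (s, l), (t, l), (u, l)]"
    using \<open>j < l\<close> \<open>distinct [s, t, u]\<close> by auto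
  show ?thesis
    by (rule reduces_to_zero_spoly_2x3_minors[OF slo dist V
          inner_minor_in_inner_minors[OF I1] inner_minor_in_inner_minors[OF I2]
          inner_minor_in_inner_minors[OF I3] inner_minor_same_rows[OF st]
          inner_minor_same_rows[OF su] inner_minor_same_rows[OF tu]])
qed

lemma corners_eq_Times: "{a, b, ul_corner a b, lr_corner a b} = {fst a, fst b} \<times> {snd a, snd b}"
  by (cases a, cases b) (auto simp: ul_corner_def lr_corner_def)

lemma card_Int_doubleton_eq_2:
  fixes i k i' k' :: "'a::linorder"
  assumes "i < k" "i' < k'" "card ({i, k} \<inter> {i', k'}) = 2"
  shows "i = i' \<and> k = k'"
proof -
  have "{i, k} \<inter> {i', k'} = {i, k}"
    using assms by (intro card_subset_eq) auto
  then have "i \<in> {i', k'}" "k \<in> {i', k'}"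
    by blast+
  then show ?thesis
    using assms(1,2) by auto
qed

lemma card_Int_doubleton_Times_eq_2:
  fixes i k i' k' j l j' l' :: "'a::linorder"
  assumes "i < k" "j < l" "i' < k'" "j' < l'"
    and "card ({i, k} \<times> {j, l} \<inter> {i', k'} \<times> {j', l'}) = 2"
  shows "i = i' \<and> k = k' \<and> card ({j, l} \<inter> {j', l'}) = 1 \<or>
         j = j' \<and> l = l' \<and> card ({i, k} \<inter> {i', k'}) = 1"
proof -
  define x where "x = card ({i, k} \<inter> {i', k'})"
  define y where "y = card ({j, l} \<inter> {j', l'})"
  have "x * y = 2"
    using assms(5) unfolding x_def y_def Times_Int_Times card_cartesian_product .
  moreover have "card {i, k} \<le> 2" "card {j, l} \<le> 2"
    by (simp_all add: card_insert_if)
  then have "x \<le> 2" "y \<le> 2"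
    unfolding x_def y_def by (meson card_mono finite.emptyI finite.insertI inf_le1 order_trans)+
  ultimately have "x = 2 \<and> y = 1 \<or> x = 1 \<and> y = 2"
    by (auto simp: le_Suc_eq numeral_2_eq_2)
  then show ?thesis
    using card_Int_doubleton_eq_2 assms(1-4) unfolding x_def y_def by blast
qed

theorem mainTheorem1:
  fixes P :: "point set" and a b \<alpha> \<beta> :: point and r :: "point rel"
  assumes "is_collection_of_cells P"
    and "inner_interval P a b" and "inner_interval P \<alpha> \<beta>"
    and "card ({a, b, ul_corner a b, lr_corner a b} \<inter>
               {\<alpha>, \<beta>, ul_corner \<alpha> \<beta>, lr_corner \<alpha> \<beta>}) = 2"
    and "strict_linear_order_on (vertex_set P) r" and "r \<subseteq> vertex_set P \<times> vertex_set P"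
  shows "reduces_to_zero r (inner_minors P :: 'k::field mpoly set)
           (spoly r (inner_minor a b) (inner_minor \<alpha> \<beta>))"
proof -
  obtain i j k l i' j' k' l' where
    corners: "a = (i, j)" "b = (k, l)" "\<alpha> = (i', j')" "\<beta> = (k', l')"
    by (metis surj_pair)
  have I: "inner_interval P (i, j) (k, l)" "inner_interval P (i', j') (k', l')"
    using assms(2,3) corners by simp_all
  then have "i < k" "j < l" "i' < k'" "j' < l'"
    by (simp_all add: inner_interval_def)
  moreover have "card ({i, k} \<times> {j, l} \<inter> {i', k'} \<times> {j', l'}) = 2"
    using assms(4) by (simp add: corners corners_eq_Times)
  ultimately consider "i = i'" "k = k'" "card ({j, l} \<inter> {j', l'}) = 1"
    | "j = j'" "l = l'" "card ({i, k} \<inter> {i', k'}) = 1"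
    using card_Int_doubleton_Times_eq_2 by blast
  then show ?thesis
  proof cases
    case 1
    with I(2) have "inner_interval P (i, j') (k, l')"
      by simp
    with 1 show ?thesis
      using reduces_to_zero_spoly_same_columns[OF assms(5) I(1)] corners by simp
  next
    case 2
    with I(2) have "inner_interval P (i', j) (k', l)"
      by simp
    with 2 show ?thesis
      using reduces_to_zero_spoly_same_rows[OF assms(5) I(1)] corners by simp
  qed
qed

end
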